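(* Let $\underline t\in(\mathbb{C}^* )^4$ and let $C_{\underline t}=\{R_{\underline t}=0\}\subset\mathbb{C}^3$. For $\{i,j,k\}=\{1,2,3\}$ let $\gamma_i$ be the automorphism of $C_{\underline t}$ fixing $X_j,X_k$ and sending $X_i\mapsto -X_i+X_jX_k+p_i$. Then the group homomorphism $K\to \mathrm{Aut}(C_{\underline t})$ determined by $g_i\mapsto\gamma_i$ ($i=1,2,3$) is injective.
   Context: For $\underline t=(k_0,k_1,u_0,u_1)$, put $\bar k_i=k_i-k_i^{-1}$, $\bar u_i=u_i-u_i^{-1}$, $p_1=\bar u_0\bar k_0+\bar k_1\bar u_1$, $p_2=\bar u_1\bar u_0+\bar k_0\bar k_1$, $p_3=\bar k_0\bar u_1+\bar k_1\bar u_0$, $p_0=\bar k_0^2+\bar k_1^2+\bar u_0^2+\bar u_1^2-\bar k_0\bar k_1\bar u_0\bar u_1$, and $R_{\underline t}=X_1X_2X_3-X_1^2-X_2^2-X_3^2+p_1X_1+p_2X_2+p_3X_3+p_0+4$. (Thus $\gamma_i$ exchanges the two roots of $R_{\underline t}=0$ viewed as a quadratic equation in $X_i$; each $\gamma_i$ is an involution of $C_{\underline t}$.) $K$ is the kernel of the reduction map $PGL(2,\mathbb{Z})\to PGL(2,\mathbb{Z}/2)$; it is freely generated (as a free product of three groups of order $2$) by the images of the involutions $g_1=\begin{pmatrix}1&0\\0&-1\end{pmatrix}$, $g_2=\begin{pmatrix}1&2\\0&-1\end{pmatrix}$, $g_3=\begin{pmatrix}1&0\\2&-1\end{pmatrix}$.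 *)

theory Defs
  imports "HOL-Analysis.Analysis"
begin

definition bar :: "complex \<Rightarrow> complex" where
  "bar z = z - inverse z"

definition pcoef :: "complex \<times> complex \<times> complex \<times> complex \<Rightarrow> nat \<Rightarrow> complex" where
  "pcoef t i = (case t of (k0,k1,u0,u1) \<Rightarrow>
     (if i = 1 then bar u0 * bar k0 + bar k1 * bar u1
      else if i = 2 then bar u1 * bar u0 + bar k0 * bar k1
      else if i = 3 then bar k0 * bar u1 + bar k1 * bar u0
      else (bar k0)^2 + (bar k1)^2 + (bar u0)^2 + (bar u1)^2
             - bar k0 * bar k1 * bar u0 * bar u1))"

definition Rt :: "complex \<times> complex \<times> complex \<times> complex \<Rightarrow> complex \<times> complex \<times> complex \<Rightarrow> complex" where
  "Rt t X = (case X of (X1,X2,X3) \<Rightarrow>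
     X1*X2*X3 - X1^2 - X2^2 - X3^2 + pcoef t 1 * X1 + pcoef t 2 * X2 + pcoef t 3 * X3
       + pcoef t 0 + 4)"

definition Ct :: "complex \<times> complex \<times> complex \<times> complex \<Rightarrow> (complex \<times> complex \<times> complex) set" where
  "Ct t = {X. Rt t X = 0}"

text \<open>The involutions gamma_i (i = 1,2,3), as maps of C^3 (they preserve C_t).\<close>
definition gam :: "complex \<times> complex \<times> complex \<times> complex \<Rightarrow> nat \<Rightarrow> complex \<times> complex \<times> complex \<Rightarrow> complex \<times> complex \<times> complex" where
  "gam t i X = (case X of (X1,X2,X3) \<Rightarrow>
     (if i = 1 then (- X1 + X2*X3 + pcoef t 1, X2, X3)
      else if i = 2 then (X1, - X2 + X1*X3 + pcoef t 2, X3)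
      else (X1, X2, - X3 + X1*X2 + pcoef t 3)))"

definition gmat :: "nat \<Rightarrow> int^2^2" where
  "gmat i = (if i = 1 then (\<chi> r c. if r = 1 then (if c = 1 then 1 else 0) else (if c = 1 then 0 else -1))
             else if i = 2 then (\<chi> r c. if r = 1 then (if c = 1 then 1 else 2) else (if c = 1 then 0 else -1))
             else (\<chi> r c. if r = 1 then (if c = 1 then 1 else 0) else (if c = 1 then 2 else -1)))"

fun word_mat :: "nat list \<Rightarrow> int^2^2" where
  "word_mat [] = mat 1"
| "word_mat (i # w) = gmat i ** word_mat w"

fun word_gam :: "complex \<times> complex \<times> complex \<times> complex \<Rightarrow> nat list \<Rightarrow> complex \<times> complex \<times> complex \<Rightarrow> complex \<times> complex \<times> complex" where
  "word_gam t [] = id"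
| "word_gam t (i # w) = gam t i \<circ> word_gam t w"

text \<open>Equality in PGL(2,Z) = GL(2,Z)/{1,-1}.\<close>
definition pgl_eq :: "int^2^2 \<Rightarrow> int^2^2 \<Rightarrow> bool" where
  "pgl_eq A B \<longleftrightarrow> A = B \<or> A = - B"

end

theory Submission
  imports Defs
begin

text \<open>
  The involutions \<open>\<gamma>\<^sub>i\<close> play ping-pong on \<open>C\<^sub>t\<close>. Put \<open>M = |p\<^sub>1| + |p\<^sub>2| + |p\<^sub>3| + 3\<close> and let \<open>U\<^sub>j\<close> be the
  set of points all of whose coordinates have modulus at least \<open>M\<close> and whose \<open>j\<close>-th coordinate
  has strictly the largest modulus. For \<open>i \<noteq> j\<close>, \<open>\<gamma>\<^sub>i\<close> maps \<open>U\<^sub>j\<close> into \<open>U\<^sub>i\<close>, because the new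
  coordinate \<open>X\<^sub>jX\<^sub>k - X\<^sub>i + p\<^sub>i\<close> is larger than \<open>X\<^sub>j\<close> in modulus. Every \<open>U\<^sub>j\<close> meets \<open>C\<^sub>t\<close>: set
  the two other coordinates to \<open>M\<close> and take the larger root of the resulting quadratic
  equation in \<open>X\<^sub>j\<close>. So a nonempty word without repeated adjacent letters moves a point of
  \<open>U\<^sub>j \<inter> C\<^sub>t\<close>, where \<open>j\<close> differs from its first and last letters. If \<open>w\<close> and \<open>w'\<close> act alike on
  \<open>C\<^sub>t\<close>, the free reduction of \<open>w'\<^sup>-\<^sup>1w\<close> acts trivially, hence is empty, and \<open>w\<close>, \<open>w'\<close> even give
  the same matrix in \<open>GL(2,\<int>)\<close>.
\<close>

fun cancel_pairs :: "'a list \<Rightarrow> 'a list" where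
  "cancel_pairs [] = []"
| "cancel_pairs (i # w) =
     (case cancel_pairs w of [] \<Rightarrow> [i] | j # u \<Rightarrow> if i = j then u else i # j # u)"

lemma distinct_adj_cancel_pairs: "distinct_adj (cancel_pairs w)"
  by (induction w) (auto split: list.split dest: distinct_adj_ConsD)

lemma set_cancel_pairs_subset: "set (cancel_pairs w) \<subseteq> set w"
  by (induction w) (auto split: list.split)

locale involution_words = monoid +
  fixes gen :: "'i \<Rightarrow> 'a"
  assumes gen_mult_gen [simp]: "gen i \<^bold>* gen i = \<^bold>1"
begin

lemma gen_mult_gen_left [simp]: "gen i \<^bold>* (gen i \<^bold>* a) = a"
  by (simp add: assoc[symmetric])

definition word_eval :: "'i list \<Rightarrow> 'a" where
  "word_eval w = foldr (\<lambda>i x. gen i \<^bold>* x) w \<^bold>1"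

lemma word_eval_Nil [simp]: "word_eval [] = \<^bold>1"
  and word_eval_Cons [simp]: "word_eval (i # w) = gen i \<^bold>* word_eval w"
  by (simp_all add: word_eval_def)

lemma word_eval_append: "word_eval (u @ v) = word_eval u \<^bold>* word_eval v"
  by (induction u) (simp_all add: assoc)

lemma word_eval_cancel_pairs: "word_eval (cancel_pairs w) = word_eval w"
proof (induction w)
  case (Cons i w)
  then show ?case
    by (cases "cancel_pairs w") (auto simp: Cons.IH[symmetric])
qed simp

lemma word_eval_rev_mult: "word_eval (rev w) \<^bold>* word_eval w = \<^bold>1"
  by (induction w) (simp_all add: word_eval_append assoc)

lemma word_eval_eq_if_rev_mult_eq_one:
  assumes "word_eval (rev v) \<^bold>* word_eval w = \<^bold>1"
  shows "word_eval w = word_eval v"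
proof -
  have "word_eval w = word_eval v \<^bold>* word_eval (rev v) \<^bold>* word_eval w"
    using word_eval_rev_mult[of "rev v"] by simp
  also have "\<dots> = word_eval v"
    using assms by (simp add: assoc)
  finally show ?thesis .
qed

lemma word_eval_eq_if_cancel_pairs_Nil:
  assumes "cancel_pairs (rev v @ w) = []"
  shows "word_eval w = word_eval v"
proof (rule word_eval_eq_if_rev_mult_eq_one)
  have "word_eval (rev v) \<^bold>* word_eval w = word_eval (cancel_pairs (rev v @ w))"
    by (simp add: word_eval_cancel_pairs word_eval_append)
  also have "\<dots> = \<^bold>1"
    by (simp add: assms)
  finally show "word_eval (rev v) \<^bold>* word_eval w = \<^bold>1" .
qed

end

interpretation gam_words: involution_words "(\<circ>)" id "gam t" for t
  by unfold_locales (auto simp: gam_def split: prod.split)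

lemma gmat_mult_gmat: "gmat i ** gmat i = mat 1"
  unfolding gmat_def by (auto simp: vec_eq_iff matrix_matrix_mult_def mat_def sum_2 forall_2)

interpretation mat_words: involution_words "(**)" "mat 1 :: int^2^2" gmat
  by unfold_locales (simp_all add: matrix_mul_assoc gmat_mult_gmat)

lemma word_gam_eq_word_eval: "word_gam t w = gam_words.word_eval t w"
  by (induction w) (simp_all only: word_gam.simps gam_words.word_eval_Nil gam_words.word_eval_Cons)

lemma word_gam_append: "word_gam t (u @ v) = word_gam t u \<circ> word_gam t v"
  by (simp only: word_gam_eq_word_eval gam_words.word_eval_append)

lemma word_gam_cancel_pairs: "word_gam t (cancel_pairs w) = word_gam t w"
  by (simp only: word_gam_eq_word_eval gam_words.word_eval_cancel_pairs)

lemma word_gam_rev_apply: "word_gam t (rev w) (word_gam t w X) = X"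
  using fun_cong[OF gam_words.word_eval_rev_mult[of t w], of X]
  by (simp only: word_gam_eq_word_eval comp_apply id_apply)

lemma word_mat_eq_word_eval: "word_mat w = mat_words.word_eval w"
  by (induction w) simp_all

lemma word_gam_apply: "word_gam t w X = foldr (gam t) w X"
  by (induction w) simp_all

lemma ping_pong:
  fixes f :: "'i \<Rightarrow> 'x \<Rightarrow> 'x" and U :: "'i \<Rightarrow> 'x set"
  assumes maps: "\<And>i j. i \<in> I \<Longrightarrow> j \<in> I \<Longrightarrow> i \<noteq> j \<Longrightarrow> f i ` U j \<subseteq> U i"
    and "distinct_adj v" "v \<noteq> []" "set v \<subseteq> I" "j \<in> I" "j \<noteq> last v" "x \<in> U j"
  shows "foldr f v x \<in> U (hd v)"
  using assms(2-)
proof (induction v)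
  case (Cons i u)
  show ?case
  proof (cases u)
    case Nil
    then show ?thesis using Cons.prems maps[of i j] by auto
  next
    case (Cons k u')
    then have "foldr f u x \<in> U k"
      using Cons.IH Cons.prems by (auto dest: distinct_adj_ConsD)
    then show ?thesis using Cons.prems \<open>u = k # u'\<close> maps[of i k] by auto
  qed
qed simp

definition coord :: "complex \<times> complex \<times> complex \<Rightarrow> nat \<Rightarrow> complex" where
  "coord X i = (case X of (a, b, c) \<Rightarrow> if i = 1 then a else if i = 2 then b else c)"

definition pbound :: "complex \<times> complex \<times> complex \<times> complex \<Rightarrow> real" where
  "pbound t = norm (pcoef t 1) + norm (pcoef t 2) + norm (pcoef t 3)"

definition dominant_region :: "real \<Rightarrow> nat \<Rightarrow> (complex \<times> complex \<times> complex) set" where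
  "dominant_region M j = {X. (\<forall>i\<in>{1,2,3}. M \<le> norm (coord X i)) \<and>
     (\<forall>i\<in>{1,2,3}. i \<noteq> j \<longrightarrow> norm (coord X i) < norm (coord X j))}"

lemma dominant_region_disjoint:
  "i \<in> {1,2,3} \<Longrightarrow> j \<in> {1,2,3} \<Longrightarrow> i \<noteq> j \<Longrightarrow> dominant_region M i \<inter> dominant_region M j = {}"
  by (fastforce simp: dominant_region_def)

lemma norm_escape:
  fixes x y z p :: "'a::real_normed_field"
  assumes "norm p + 3 \<le> M" "M \<le> norm y" "M \<le> norm z" "norm x < norm y"
  shows "norm y < norm (y * z - x + p)"
proof -
  have M3: "3 \<le> M"
    using assms(1) norm_ge_zero[of p] by linarith
  have "norm y * M \<le> norm (y * z)"
    using assms M3 by (simp add: norm_mult mult_left_mono)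
  moreover have "norm (y * z) \<le> norm (y * z - x + p) + norm x + norm p"
    using norm_triangle_ineq4[of "y * z - x + p" "p - x"] norm_triangle_ineq4[of p x]
    by (simp add: algebra_simps)
  moreover have "M * (M - 2) \<le> norm y * (M - 2)"
    using assms M3 by (intro mult_right_mono) auto
  moreover have "M \<le> M * (M - 2)"
    using M3 by (intro mult_le_cancel_left1[THEN iffD2]) auto
  ultimately show ?thesis
    using assms by (simp add: algebra_simps)
qed

lemma third_index:
  obtains k :: nat where "k \<in> {1,2,3}" "k \<noteq> a" "k \<noteq> b"
proof -
  have "\<not> {1,2,3} \<subseteq> {a, b}"
    by auto
  then show ?thesis
    using that by blast
qed

lemma coord_gam_self:
  assumes "i \<in> {1,2,3}" "j \<in> {1,2,3}" "k \<in> {1,2,3}" "i \<noteq> j" "i \<noteq> k" "j \<noteq> k"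
  shows "coord (gam t i X) i = coord X j * coord X k - coord X i + pcoef t i"
  using assms by (cases X) (auto simp: gam_def coord_def)

lemma coord_gam_other:
  "i \<in> {1,2,3} \<Longrightarrow> l \<in> {1,2,3} \<Longrightarrow> l \<noteq> i \<Longrightarrow> coord (gam t i X) l = coord X l"
  by (cases X) (auto simp: gam_def coord_def)

lemma gam_maps_dominant_region:
  assumes "i \<in> {1,2,3}" "j \<in> {1,2,3}" "i \<noteq> j"
  shows "gam t i ` dominant_region (pbound t + 3) j \<subseteq> dominant_region (pbound t + 3) i"
proof
  fix Y assume "Y \<in> gam t i ` dominant_region (pbound t + 3) j"
  then obtain X where X: "X \<in> dominant_region (pbound t + 3) j" and Y: "Y = gam t i X"
    by blast
  define M where "M = pbound t + 3"
  obtain k where k: "k \<in> {1,2,3}" "k \<noteq> i" "k \<noteq> j"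
    by (rule third_index)
  have p: "norm (pcoef t i) + 3 \<le> M"
    using assms(1) by (auto simp: M_def pbound_def)
  have bounds: "M \<le> norm (coord X j)" "M \<le> norm (coord X k)"
      "norm (coord X i) < norm (coord X j)" "norm (coord X k) < norm (coord X j)"
    using X assms k by (auto simp: dominant_region_def M_def)
  have new: "norm (coord X j) < norm (coord Y i)"
    using norm_escape[OF p bounds(1-3)]
      coord_gam_self[OF assms(1,2) k(1) assms(3) k(2)[symmetric] k(3)[symmetric]]
    by (simp add: Y)
  have "M \<le> norm (coord Y l) \<and> (l \<noteq> i \<longrightarrow> norm (coord Y l) < norm (coord Y i))"
    if l: "l \<in> {1,2,3}" for l
  proof (cases "l = i")
    case True
    then show ?thesis
      using new bounds(1) by simp
  next
    case False
    then have "coord Y l = coord X l"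
      using coord_gam_other[OF assms(1) l] by (simp add: Y)
    moreover have "l = j \<or> l = k"
      using l False assms k by auto
    ultimately show ?thesis
      using new bounds by auto
  qed
  then show "Y \<in> dominant_region (pbound t + 3) i"
    by (simp add: dominant_region_def M_def)
qed

definition axis_point :: "nat \<Rightarrow> complex \<Rightarrow> complex \<Rightarrow> complex \<times> complex \<times> complex" where
  "axis_point j x c = (if j = 1 then (x, c, c) else if j = 2 then (c, x, c) else (c, c, x))"

lemma coord_axis_point:
  "i \<in> {1,2,3} \<Longrightarrow> j \<in> {1,2,3} \<Longrightarrow> coord (axis_point j x c) i = (if i = j then x else c)"
  by (auto simp: axis_point_def coord_def)

lemma Rt_axis_point:
  assumes "j \<in> {1,2,3}"
  shows "Rt t (axis_point j x c) = - (x^2 - (c^2 + pcoef t j) * x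
    + (2 * c^2 - (pcoef t 1 + pcoef t 2 + pcoef t 3 - pcoef t j) * c - pcoef t 0 - 4))"
  using assms by (auto simp: Rt_def axis_point_def algebra_simps power2_eq_square)

lemma quadratic_has_large_root:
  fixes s q :: complex
  obtains x where "x^2 - s * x + q = 0" "norm s \<le> 2 * norm x"
proof -
  define d where "d = csqrt (s^2 - 4 * q)"
  define r1 where "r1 = (s + d) / 2"
  define r2 where "r2 = (s - d) / 2"
  have "r1^2 - s * r1 + q = (d^2 - (s^2 - 4 * q)) / 4" "r2^2 - s * r2 + q = (d^2 - (s^2 - 4 * q)) / 4"
    by (simp_all add: r1_def r2_def field_simps power2_eq_square)
  then have "r1^2 - s * r1 + q = 0" "r2^2 - s * r2 + q = 0"
    by (simp_all add: d_def)
  moreover have "norm s \<le> norm r1 + norm r2"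
    using norm_triangle_ineq[of r1 r2] by (simp add: r1_def r2_def add_divide_distrib[symmetric])
  ultimately show ?thesis
    using that by (cases "norm r1 \<le> norm r2") force+
qed

lemma Ct_meets_dominant_region:
  assumes "j \<in> {1,2,3}"
  obtains X where "X \<in> Ct t" "X \<in> dominant_region (pbound t + 3) j"
proof -
  define M where "M = pbound t + 3"
  define c where "c = complex_of_real M"
  have p: "norm (pcoef t j) + 3 \<le> M"
    using assms by (auto simp: M_def pbound_def)
  then have M3: "3 \<le> M"
    using norm_ge_zero[of "pcoef t j"] by linarith
  then have norm_c: "norm c = M"
    by (simp add: c_def)
  obtain x where root: "x^2 - (c^2 + pcoef t j) * x
      + (2 * c^2 - (pcoef t 1 + pcoef t 2 + pcoef t 3 - pcoef t j) * c - pcoef t 0 - 4) = 0"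
    and large: "norm (c^2 + pcoef t j) \<le> 2 * norm x"
    by (rule quadratic_has_large_root)
  have "M^2 - norm (pcoef t j) \<le> norm (c^2 + pcoef t j)"
    using norm_triangle_ineq4[of "c^2 + pcoef t j" "pcoef t j"] norm_c by (simp add: norm_power)
  moreover have "0 \<le> M * (M - 3)"
    using M3 by simp
  ultimately have "M < norm x"
    using large p by (simp add: power2_eq_square algebra_simps)
  then have "axis_point j x c \<in> dominant_region M j"
    using assms norm_c by (auto simp: dominant_region_def coord_axis_point)
  moreover have "axis_point j x c \<in> Ct t"
    using root assms by (simp add: Ct_def Rt_axis_point)
  ultimately show ?thesis
    using that by (simp add: M_def)
qed

lemma word_gam_moves_point:
  assumes "v \<noteq> []" "distinct_adj v" "set v \<subseteq> {1,2,3}"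
  obtains X where "X \<in> Ct t" "word_gam t v X \<noteq> X"
proof -
  have hd: "hd v \<in> {1,2,3}"
    using assms(1,3) hd_in_set by blast
  obtain j where j: "j \<in> {1,2,3}" "j \<noteq> hd v" "j \<noteq> last v"
    by (rule third_index)
  obtain X where X: "X \<in> Ct t" "X \<in> dominant_region (pbound t + 3) j"
    by (rule Ct_meets_dominant_region[OF j(1)])
  have "foldr (gam t) v X \<in> dominant_region (pbound t + 3) (hd v)"
    by (rule ping_pong[where U = "dominant_region (pbound t + 3)",
          OF gam_maps_dominant_region assms(2,1,3) j(1,3) X(2)])
  then have "word_gam t v X \<in> dominant_region (pbound t + 3) (hd v)"
    by (simp only: word_gam_apply)
  moreover have "dominant_region (pbound t + 3) (hd v) \<inter> dominant_region (pbound t + 3) j = {}"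
    using j(2) by (intro dominant_region_disjoint[OF hd j(1)]) simp
  ultimately have "word_gam t v X \<noteq> X"
    using X(2) by auto
  with X(1) show ?thesis
    by (rule that)
qed

lemma cancel_pairs_eq_Nil_if_word_gam_agree_on_Ct:
  assumes "set w \<subseteq> {1,2,3}" "set w' \<subseteq> {1,2,3}"
    and agree: "\<forall>X\<in>Ct t. word_gam t w X = word_gam t w' X"
  shows "cancel_pairs (rev w' @ w) = []"
proof (rule ccontr)
  let ?v = "cancel_pairs (rev w' @ w)"
  assume "?v \<noteq> []"
  moreover have "distinct_adj ?v" "set ?v \<subseteq> {1,2,3}"
    using set_cancel_pairs_subset[of "rev w' @ w"] assms(1,2)
    by (auto simp: distinct_adj_cancel_pairs)
  ultimately obtain X where X: "X \<in> Ct t" "word_gam t ?v X \<noteq> X"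
    by (rule word_gam_moves_point)
  have "word_gam t ?v X = word_gam t (rev w') (word_gam t w' X)"
    using agree X(1) by (simp add: word_gam_cancel_pairs word_gam_append)
  with X(2) show False
    by (simp add: word_gam_rev_apply)
qed

theorem corollary2p4:
  fixes k0 k1 u0 u1 :: complex and w w' :: "nat list"
  assumes "k0 \<noteq> 0" "k1 \<noteq> 0" "u0 \<noteq> 0" "u1 \<noteq> 0"
    and "set w \<subseteq> {1,2,3}" "set w' \<subseteq> {1,2,3}"
    and "\<forall>X \<in> Ct (k0,k1,u0,u1). word_gam (k0,k1,u0,u1) w X = word_gam (k0,k1,u0,u1) w' X"
  shows "pgl_eq (word_mat w) (word_mat w')"
proof -
  have "cancel_pairs (rev w' @ w) = []"
    using assms(5-7) by (rule cancel_pairs_eq_Nil_if_word_gam_agree_on_Ct)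
  then have "mat_words.word_eval w = mat_words.word_eval w'"
    by (rule mat_words.word_eval_eq_if_cancel_pairs_Nil)
  then show ?thesis
    by (simp add: pgl_eq_def word_mat_eq_word_eval)
qed

end
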